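(* Let $k\in\mathbb{N}_0$. Then: (a) the set of $v\in\widetilde V$ with $\rho_k(v)=k+4$ is exactly $\{\langle1\rangle^{k+4},\ \langle2\rangle^{k+3},\ (\langle3\rangle^{k+2},1),\ (\langle5\rangle^{k+1},2,1)\}$; (b) the set of minimal elements of $\{v\in\widetilde V:\rho_k(v)>k+4\}$ is exactly $\{\langle1\rangle^{k+5},\ (2,\langle1\rangle^{k+3}),\ (3,\langle2\rangle^{k+2}),\ (4,\langle3\rangle^{k+1},1),\ (6,\langle5\rangle^{k},2,1)\}$; (c) consequently, for every $w\in\widetilde V$ with $\rho_k(w)>k+4$ there exists $v\in\widetilde V$ with $v<w$ and $\rho_k(v)=k+4$.
   Context: For $k\in\mathbb{N}_0$ put $t=k+2$, $u_0=0$, $u_1=1$, $u_{i+2}=tu_{i+1}-u_i$; $\rho_k(0)=0$ and $\rho_k(n)=1+\frac{u_{n-1}}{u_n+1}$ for $n\in\mathbb{N}$. $\widetilde V$ is the set of infinite nonincreasing sequences of nonnegative integers that are eventually $0$ (written by listing nonzero entries), with componentwise order $\le$; $v<w$ means $v\le w$, $v\ne w$. $\rho_k(v)=\sum_i\rho_k(v_i)$. $\langle s\rangle^r$ denotes $s$ repeated $r$ times (omitted if $r=0$). *)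

theory Defs
  imports Complex_Main
begin

fun useq :: "nat \<Rightarrow> nat \<Rightarrow> int" where
  "useq k 0 = 0"
| "useq k (Suc 0) = 1"
| "useq k (Suc (Suc i)) = (int k + 2) * useq k (Suc i) - useq k i"

definition rho :: "nat \<Rightarrow> nat \<Rightarrow> real" where
  "rho k n = (if n = 0 then 0
              else 1 + real_of_int (useq k (n - 1)) / real_of_int (useq k n + 1))"

text \<open>The set V-tilde: nonincreasing sequences of naturals that are eventually 0.
  Ordered componentwise via the pointwise order on functions (le_fun).\<close>
definition Vt :: "(nat \<Rightarrow> nat) set" where
  "Vt = {v. (\<forall>i j. i \<le> j \<longrightarrow> v j \<le> v i) \<and> (\<exists>N. \<forall>i\<ge>N. v i = 0)}"

definition rhoV :: "nat \<Rightarrow> (nat \<Rightarrow> nat) \<Rightarrow> real" where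
  "rhoV k v = (\<Sum>i\<in>{i. v i \<noteq> 0}. rho k (v i))"

definition seq :: "nat list \<Rightarrow> nat \<Rightarrow> nat" where
  "seq xs i = (if i < length xs then xs ! i else 0)"

definition minimal_elements :: "(nat \<Rightarrow> nat) set \<Rightarrow> (nat \<Rightarrow> nat) set" where
  "minimal_elements S = {v \<in> S. \<not> (\<exists>w\<in>S. w < v)}"

end

theory Submission
  imports Defs
begin

text \<open>
  For n \<ge> 1 write rho_k(n) = 1 + g(n) with g(n) = u_{n-1}/(u_n + 1). Cassini's identity
  u_n^2 - u_{n-1} u_{n+1} = 1 makes g strictly increasing with g(1) = 0, so rho_k is strictly
  increasing on all of \<nat> and rho_k(v) is strictly monotone in v. An induction bounds every g(n)
  by a rational c_k with (k+1) c_k \<le> 1. Hence a sequence v with rho_k(v) \<ge> k + 4 has at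
  least k + 3 nonzero entries, and a case analysis on the entries v_k, ..., v_{k+4} shows that
  either rho_k(v) < k + 4, or v is one of the four level sequences of (a), or v dominates one
  of the five sequences of (b). Each of these five strictly dominates a level sequence, so its
  value exceeds k + 4; this gives (a), and since the five form an antichain also (b) and (c).
\<close>

lemma useq_nonneg_less_Suc: "0 \<le> useq k n \<and> useq k n < useq k (Suc n)"
proof (induction n)
  case 0
  then show ?case by simp
next
  case (Suc n)
  have "useq k (Suc (Suc n)) - useq k (Suc n) = int k * useq k (Suc n) + (useq k (Suc n) - useq k n)"
    by (simp add: algebra_simps)
  moreover have "0 \<le> int k * useq k (Suc n)"
    using Suc by simp
  ultimately show ?case
    using Suc by linarith
qed

lemma useq_cassini: "useq k (Suc n)^2 - useq k n * useq k (Suc (Suc n)) = 1"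
  by (induction n) (simp_all add: power2_eq_square algebra_simps)

lemma useq_ratio_bound:
  "(int k^3 + 5 * int k^2 + 6 * int k + 1) * useq k n \<le> (int k^2 + 3 * int k + 1) * useq k (Suc n)"
proof (induction n)
  case 0
  then show ?case by simp
next
  case (Suc n)
  define A where "A = int k^2 + 3 * int k + 1"
  define D where "D = int k^3 + 5 * int k^2 + 6 * int k + 1"
  have "D * (A * useq k (Suc (Suc n)) - D * useq k (Suc n))
          = int k * useq k (Suc n) + A * (A * useq k (Suc n) - D * useq k n)"
    by (simp add: A_def D_def algebra_simps power2_eq_square power3_eq_cube)
  also have "\<dots> \<ge> 0"
    using Suc useq_nonneg_less_Suc[of k "Suc n"] by (simp add: A_def D_def)
  finally have "0 \<le> D * (A * useq k (Suc (Suc n)) - D * useq k (Suc n))" .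
  moreover have "D > 0"
    by (simp add: D_def add_pos_nonneg)
  ultimately have "D * useq k (Suc n) \<le> A * useq k (Suc (Suc n))"
    by (simp add: zero_le_mult_iff)
  then show ?case
    by (simp only: A_def D_def)
qed

lemma useq_small_values:
  "useq k 2 = int k + 2"
  "useq k 3 = (int k + 1) * (int k + 3)" "useq k 3 + 1 = (int k + 2) * (int k + 2)"
  "useq k 4 = (int k + 2) * (int k^2 + 4 * int k + 2)"
  "useq k 4 + 1 = (int k + 1) * (int k^2 + 5 * int k + 5)"
  "useq k 5 + 1 = (int k + 1) * (int k + 3) * (int k^2 + 4 * int k + 2)"
  by (simp_all add: eval_nat_numeral algebra_simps power2_eq_square)

lemma rho_Suc: "rho k (Suc n) = 1 + useq k n / (useq k (Suc n) + 1)"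
  by (simp add: rho_def)

lemma strict_mono_rho: "strict_mono (rho k)"
proof (rule strict_mono_Suc_iff[THEN iffD2], intro allI)
  fix n
  show "rho k n < rho k (Suc n)"
  proof (cases n)
    case 0
    then show ?thesis by (simp add: rho_def)
  next
    case (Suc m)
    let ?u0 = "useq k m" and ?u1 = "useq k (Suc m)" and ?u2 = "useq k (Suc (Suc m))"
    have "?u0 * (?u2 + 1) < ?u1 * (?u1 + 1)"
      using useq_cassini[of k m] useq_nonneg_less_Suc[of k m]
      by (simp add: algebra_simps power2_eq_square del: useq.simps)
    then have "real_of_int (?u0 * (?u2 + 1)) < real_of_int (?u1 * (?u1 + 1))"
      by (simp only: of_int_less_iff)
    moreover have "0 \<le> ?u1" "0 \<le> ?u2"
      using useq_nonneg_less_Suc by blast+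
    ultimately have "real_of_int ?u0 / (?u1 + 1) < ?u1 / (?u2 + 1)"
      by (simp add: divide_simps del: useq.simps)
    then show ?thesis
      by (simp add: Suc rho_Suc del: useq.simps)
  qed
qed

text \<open>rho_bound k - 1 = (u_3 - u_2)/(u_4 - u_3), a ratio of consecutive differences of u;
  it dominates every u_{n-1}/u_n.\<close>
definition rho_bound :: "nat \<Rightarrow> real" where
  "rho_bound k = 1 + (real k^2 + 3 * real k + 1) / (real k^3 + 5 * real k^2 + 6 * real k + 1)"

lemma rho_less_bound: "rho k n < rho_bound k"
proof (cases n)
  case 0
  then show ?thesis by (simp add: rho_def rho_bound_def add_pos_nonneg)
next
  case (Suc m)
  have "(int k^3 + 5 * int k^2 + 6 * int k + 1) * useq k m
          < (int k^2 + 3 * int k + 1) * (useq k (Suc m) + 1)"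
    using useq_ratio_bound[of k m] zero_le_power2[of "int k"] of_nat_0_le_iff[of k]
    unfolding distrib_left mult_1_right by linarith
  then have "real_of_int ((int k^3 + 5 * int k^2 + 6 * int k + 1) * useq k m)
          < real_of_int ((int k^2 + 3 * int k + 1) * (useq k (Suc m) + 1))"
    by (simp only: of_int_less_iff)
  moreover have "0 \<le> useq k (Suc m)"
    using useq_nonneg_less_Suc by blast
  moreover have "0 < real k^3 + 5 * real k^2 + 6 * real k + 1"
    by (intro add_nonneg_pos add_nonneg_nonneg) simp_all
  ultimately have "useq k m / (useq k (Suc m) + 1)
      < (real k^2 + 3 * real k + 1) / (real k^3 + 5 * real k^2 + 6 * real k + 1)"
    by (simp add: divide_simps mult.commute)
  then show ?thesis
    by (simp add: Suc rho_Suc rho_bound_def)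
qed

lemma rho_small_values:
  "rho k (Suc 0) = 1"
  "rho k 2 = 1 + 1 / (real k + 3)"
  "rho k 3 = 1 + 1 / (real k + 2)"
  "rho k 4 = 1 + (real k + 3) / (real k^2 + 5 * real k + 5)"
  "rho k 5 = 1 + (real k + 2) / ((real k + 1) * (real k + 3))"
proof -
  have "0 < real k^2 + 4 * real k + 2"
    by (intro add_nonneg_pos add_nonneg_nonneg) simp_all
  then show "rho k 5 = 1 + (real k + 2) / ((real k + 1) * (real k + 3))"
    by (simp add: rho_def useq_small_values(4,6))
  show "rho k (Suc 0) = 1" "rho k 2 = 1 + 1 / (real k + 3)"
    by (simp_all add: rho_def useq_small_values(1))
  show "rho k 3 = 1 + 1 / (real k + 2)"
    by (simp add: rho_def useq_small_values(1,3))
  show "rho k 4 = 1 + (real k + 3) / (real k^2 + 5 * real k + 5)"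
    by (simp add: rho_def useq_small_values(2,5))
qed

lemma rho_level_identities:
  "(real k + 3) * rho k 2 = real k + 4"
  "(real k + 2) * rho k 3 + 1 = real k + 4"
  "(real k + 1) * rho k 5 + rho k 2 + 1 = real k + 4"
proof -
  have "(real k + 1) * ((real k + 2) / ((real k + 1) * (real k + 3))) = (real k + 2) / (real k + 3)"
    by simp
  then show "(real k + 1) * rho k 5 + rho k 2 + 1 = real k + 4"
    by (simp add: rho_small_values algebra_simps add_divide_distrib[symmetric])
  show "(real k + 3) * rho k 2 = real k + 4" "(real k + 2) * rho k 3 + 1 = real k + 4"
    by (simp_all add: rho_small_values field_simps)
qed

lemma rho_bound_le:
  "(real k + 1) * rho_bound k \<le> real k + 2" "(real k + 2) * rho_bound k \<le> real k + 4"
proof -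
  have "0 < real k^3 + 5 * real k^2 + 6 * real k + 1"
    by (intro add_nonneg_pos add_nonneg_nonneg) simp_all
  then show "(real k + 1) * rho_bound k \<le> real k + 2" "(real k + 2) * rho_bound k \<le> real k + 4"
    by (simp_all add: rho_bound_def field_simps power2_eq_square power3_eq_cube)
qed

lemma rho_bound_rho4_rho2: "real k * rho_bound k + rho k 4 + rho k 2 < real k + 3"
proof -
  define A where "A = real k^2 + 3 * real k + 1"
  define D where "D = real k^3 + 5 * real k^2 + 6 * real k + 1"
  define Q where "Q = real k^2 + 5 * real k + 5"
  have "0 < D" "0 < Q"
    unfolding D_def Q_def by (intro add_nonneg_pos add_nonneg_nonneg; simp)+
  have "real k * (A / D) + (real k + 3) / Q + 1 / (real k + 3)
      = (real k * A * Q * (real k + 3) + (real k + 3)^2 * D + D * Q) / (D * Q * (real k + 3))"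
    using \<open>0 < D\<close> \<open>0 < Q\<close> by (simp add: field_simps power2_eq_square)
  also have "\<dots> < 1"
  proof -
    have "real k * A * Q * (real k + 3) + (real k + 3)^2 * D + D * Q + 1 = D * Q * (real k + 3)"
      by (simp add: A_def D_def Q_def algebra_simps power2_eq_square power3_eq_cube)
    then show ?thesis
      using \<open>0 < D\<close> \<open>0 < Q\<close> by simp
  qed
  finally have "real k * (A / D) + (real k + 3) / Q + 1 / (real k + 3) < 1" .
  moreover have "real k * rho_bound k + rho k 4 + rho k 2
      = real k + 2 + (real k * (A / D) + (real k + 3) / Q + 1 / (real k + 3))"
    unfolding rho_bound_def rho_small_values A_def D_def Q_def by (simp add: algebra_simps)
  ultimately show ?thesis
    by linarith
qed

lemma seq_Nil [simp]: "seq [] i = 0"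
  by (simp add: seq_def)

lemma seq_Cons: "seq (x # xs) i = (if i = 0 then x else seq xs (i - 1))"
  by (cases i) (simp_all add: seq_def)

lemma seq_replicate: "seq (replicate n a) i = (if i < n then a else 0)"
  by (simp add: seq_def)

lemma seq_replicate_append: "seq (replicate n a @ xs) i = (if i < n then a else seq xs (i - n))"
  by (auto simp: seq_def nth_append)

text \<open>The side conditions n = m + 1 and b = a + 1 let these lemmas unify with sequences written
  with concrete numerals, without arithmetic normalisation of the instances.\<close>
lemma seq_bump:
  assumes "n = m + 1" "b = a + 1"
  shows "seq (b # replicate m a @ tail) = (seq (replicate n a @ tail))(0 := b)"
  using assms by (intro ext) (auto simp: seq_Cons seq_replicate_append)

lemma seq_less_bump:
  assumes "n = m + 1" "b = a + 1"
  shows "seq (replicate n a @ tail) < seq (b # replicate m a @ tail)"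
proof -
  have "seq (replicate n a @ tail) 0 = a"
    using assms(1) by (simp add: seq_replicate_append del: replicate_Suc)
  then show ?thesis
    unfolding seq_bump[OF assms] using assms(2)
    by (auto simp: less_fun_def le_fun_def dest: fun_cong[of _ _ 0])
qed

lemma seq_replicate_less_Suc:
  assumes "n' = n + 1" "0 < a"
  shows "seq (replicate n a) < seq (replicate n' a)"
proof -
  have "seq (replicate n a) \<le> seq (replicate n' a)"
    using assms by (simp add: le_fun_def seq_replicate del: replicate_Suc)
  moreover have "seq (replicate n a) n \<noteq> seq (replicate n' a) n"
    using assms by (simp add: seq_replicate del: replicate_Suc)
  ultimately show ?thesis
    by (auto simp: less_le)
qed

lemma Vt_iff: "v \<in> Vt \<longleftrightarrow> antimono v \<and> (\<exists>N. \<forall>i\<ge>N. v i = 0)"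
  by (simp add: Vt_def antimono_def)

lemma sorted_wrt_ge_replicate: "sorted_wrt (\<ge>) (replicate n (x::nat))"
  by (simp add: sorted_wrt_iff_nth_less)

lemma seq_in_Vt:
  assumes "sorted_wrt (\<ge>) xs"
  shows "seq xs \<in> Vt"
proof -
  have "antimono (seq xs)"
  proof (rule antimonoI)
    fix i j :: nat
    assume "i \<le> j"
    then show "seq xs j \<le> seq xs i"
      using assms sorted_wrt_nth_less[OF assms, of i j] by (auto simp: seq_def le_less)
  qed
  moreover have "\<forall>i\<ge>length xs. seq xs i = 0"
    by (simp add: seq_def)
  ultimately show ?thesis
    unfolding Vt_iff by blast
qed

lemma Vt_finite_support:
  assumes "v \<in> Vt"
  shows "finite {i. v i \<noteq> 0}"
proof -
  obtain N where "\<forall>i\<ge>N. v i = 0"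
    using assms by (auto simp: Vt_iff)
  then have "{i. v i \<noteq> 0} \<subseteq> {..<N}"
    by (auto intro: ccontr)
  then show ?thesis
    by (rule finite_subset) simp
qed

lemma antimono_eventually_zero: "antimono v \<Longrightarrow> v m = 0 \<Longrightarrow> m \<le> i \<Longrightarrow> v i = (0::nat)"
  by (metis antimonoD le_zero_eq)

lemma seq_replicate_append_le:
  assumes "antimono v" "n = m + 1" "a \<le> v m" "\<forall>j<length tail. tail ! j \<le> v (n + j)"
  shows "seq (replicate n a @ tail) \<le> v"
proof (rule le_funI)
  fix i
  show "seq (replicate n a @ tail) i \<le> v i"
  proof (cases "i < n")
    case True
    then have "v m \<le> v i"
      using assms(2) by (intro antimonoD[OF assms(1)]) simp
    then show ?thesis
      using True assms(3) by (simp add: seq_replicate_append)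
  next
    case False
    then obtain j where "i = n + j"
      using le_Suc_ex not_less by blast
    then show ?thesis
      using assms(4) by (auto simp: seq_replicate_append seq_def[of tail])
  qed
qed

lemma antimono_eq_seq_or_bump_le:
  assumes "antimono v" "n = m + 1" "b = a + 1" "a \<le> v m"
    and "\<forall>j<length tail. v (n + j) = tail ! j" "v (n + length tail) = 0"
  shows "v = seq (replicate n a @ tail) \<or> seq (b # replicate m a @ tail) \<le> v"
proof (cases "v 0 \<le> a")
  case True
  have "v i = seq (replicate n a @ tail) i" for i
  proof (cases "i < n")
    case True
    then have "v m \<le> v i" "v i \<le> v 0"
      using assms(2) by (intro antimonoD[OF assms(1)]; simp)+
    then show ?thesis
      using True \<open>v 0 \<le> a\<close> assms(4) by (simp add: seq_replicate_append)
  next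
    case False
    then obtain j where "i = n + j"
      using le_Suc_ex not_less by blast
    then show ?thesis
      using assms(5) antimono_eventually_zero[OF assms(1,6), of i]
      by (auto simp: seq_replicate_append seq_def[of tail])
  qed
  then show ?thesis by blast
next
  case False
  have "seq (replicate n a @ tail) \<le> v"
    using assms by (intro seq_replicate_append_le[of v n m]) simp_all
  then show ?thesis
    using False assms(3) unfolding seq_bump[OF assms(2,3)] by (auto simp: le_fun_def)
qed

lemma rhoV_eq_sum: "finite S \<Longrightarrow> {i. v i \<noteq> 0} \<subseteq> S \<Longrightarrow> rhoV k v = (\<Sum>i\<in>S. rho k (v i))"
  unfolding rhoV_def by (rule sum.mono_neutral_left) (auto simp: rho_def)

lemma rhoV_seq: "rhoV k (seq xs) = sum_list (map (rho k) xs)"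
proof -
  have "rhoV k (seq xs) = (\<Sum>i<length xs. rho k (seq xs i))"
    by (rule rhoV_eq_sum) (auto simp: seq_def split: if_splits)
  also have "\<dots> = sum_list (map (rho k) xs)"
    by (simp add: seq_def sum_list_sum_nth atLeast0LessThan)
  finally show ?thesis .
qed

lemma rhoV_less:
  assumes "v < w" "finite {i. w i \<noteq> 0}"
  shows "rhoV k v < rhoV k w"
proof -
  let ?S = "{i. w i \<noteq> 0}"
  have le: "v i \<le> w i" for i
    using assms(1) by (simp add: less_fun_def le_funD)
  have "v \<noteq> w"
    using assms(1) by simp
  then obtain i where "v i \<noteq> w i"
    by (auto simp: fun_eq_iff)
  then have i: "v i < w i"
    using le[of i] by simp
  have "{i. v i \<noteq> 0} \<subseteq> ?S"
  proof
    fix j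
    assume "j \<in> {i. v i \<noteq> 0}"
    then show "j \<in> ?S"
      using le[of j] by simp
  qed
  then have "rhoV k v = (\<Sum>i\<in>?S. rho k (v i))"
    using assms(2) by (rule rhoV_eq_sum[rotated])
  also have "\<dots> < (\<Sum>i\<in>?S. rho k (w i))"
  proof (rule sum_strict_mono_ex1[OF assms(2)])
    show "\<forall>j\<in>?S. rho k (v j) \<le> rho k (w j)"
      using le strict_mono_rho by (simp add: strict_mono_less_eq)
    show "\<exists>j\<in>?S. rho k (v j) < rho k (w j)"
      using i strict_mono_rho by (intro bexI[of _ i]) (auto simp: strict_mono_less)
  qed
  also have "\<dots> = rhoV k w"
    using assms(2) by (intro rhoV_eq_sum[symmetric]) auto
  finally show ?thesis .
qed

lemma rhoV_le:
  assumes "v \<le> w" "finite {i. w i \<noteq> 0}"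
  shows "rhoV k v \<le> rhoV k w"
proof (cases "v = w")
  case False
  with assms(1) have "v < w"
    by (rule order_le_neq_trans)
  then show ?thesis
    using rhoV_less[OF _ assms(2)] by (intro less_imp_le)
qed simp

lemma rhoV_prefix_bound:
  assumes "\<forall>j<length tail. v (n + j) \<le> tail ! j" "\<forall>i\<ge>n + length tail. v i = 0"
  shows "rhoV k v \<le> real n * rho_bound k + sum_list (map (rho k) tail)"
    and "0 < n \<Longrightarrow> rhoV k v < real n * rho_bound k + sum_list (map (rho k) tail)"
proof -
  have "{i. v i \<noteq> 0} \<subseteq> {..<n + length tail}"
    using assms(2) by (auto intro: ccontr)
  then have "rhoV k v = (\<Sum>i<n + length tail. rho k (v i))"
    by (intro rhoV_eq_sum) auto
  also have "\<dots> = (\<Sum>i<n. rho k (v i)) + (\<Sum>j<length tail. rho k (v (n + j)))"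
    by (induction tail) (simp_all add: ac_simps)
  finally have split: "rhoV k v = (\<Sum>i<n. rho k (v i)) + (\<Sum>j<length tail. rho k (v (n + j)))" .
  have "(\<Sum>j<length tail. rho k (v (n + j))) \<le> (\<Sum>j<length tail. rho k (tail ! j))"
    using assms(1) strict_mono_rho by (intro sum_mono) (simp add: strict_mono_less_eq)
  also have "\<dots> = sum_list (map (rho k) tail)"
    by (simp add: sum_list_sum_nth atLeast0LessThan)
  finally have tail: "(\<Sum>j<length tail. rho k (v (n + j))) \<le> sum_list (map (rho k) tail)" .
  have "(\<Sum>i<n. rho k (v i)) \<le> (\<Sum>i<n. rho_bound k)"
    by (intro sum_mono less_imp_le rho_less_bound)
  then show "rhoV k v \<le> real n * rho_bound k + sum_list (map (rho k) tail)"
    using split tail by simp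
  assume "0 < n"
  then have "(\<Sum>i<n. rho k (v i)) < (\<Sum>i<n. rho_bound k)"
    by (intro sum_strict_mono rho_less_bound) auto
  then show "rhoV k v < real n * rho_bound k + sum_list (map (rho k) tail)"
    using split tail by simp
qed

definition level_seqs :: "nat \<Rightarrow> (nat \<Rightarrow> nat) set" where
  "level_seqs k = {seq (replicate (k + 4) 1), seq (replicate (k + 3) 2),
                   seq (replicate (k + 2) 3 @ [1]), seq (replicate (k + 1) 5 @ [2, 1])}"

definition minimal_above_seqs :: "nat \<Rightarrow> (nat \<Rightarrow> nat) set" where
  "minimal_above_seqs k = {seq (replicate (k + 5) 1), seq (2 # replicate (k + 3) 1),
                           seq (3 # replicate (k + 2) 2), seq (4 # replicate (k + 1) 3 @ [1]),
                           seq (6 # replicate k 5 @ [2, 1])}"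

lemma level_seqs_subset_Vt: "level_seqs k \<subseteq> Vt"
  by (auto simp: level_seqs_def sorted_wrt_append sorted_wrt_ge_replicate intro!: seq_in_Vt)

lemma minimal_above_seqs_subset_Vt: "minimal_above_seqs k \<subseteq> Vt"
  by (auto simp: minimal_above_seqs_def sorted_wrt_append sorted_wrt_ge_replicate intro!: seq_in_Vt)

lemma rhoV_level_seqs: "v \<in> level_seqs k \<Longrightarrow> rhoV k v = real k + 4"
  using rho_level_identities[of k]
  by (auto simp: level_seqs_def rhoV_seq sum_list_replicate rho_small_values(1) algebra_simps
      simp del: replicate_Suc)

lemma level_seq_less_minimal_above:
  assumes "w \<in> minimal_above_seqs k"
  shows "\<exists>v\<in>level_seqs k. v < w"
proof -
  have "seq (replicate (k + 4) 1) < seq (replicate (k + 5) 1)"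
    by (rule seq_replicate_less_Suc) simp_all
  moreover have "seq (replicate (k + 4) 1 @ []) < seq (2 # replicate (k + 3) 1 @ [])"
    by (rule seq_less_bump) simp_all
  moreover have "seq (replicate (k + 3) 2 @ []) < seq (3 # replicate (k + 2) 2 @ [])"
    by (rule seq_less_bump) simp_all
  moreover have "seq (replicate (k + 2) 3 @ [1]) < seq (4 # replicate (k + 1) 3 @ [1])"
    by (rule seq_less_bump) simp_all
  moreover have "seq (replicate (k + 1) 5 @ [2, 1]) < seq (6 # replicate k 5 @ [2, 1])"
    by (rule seq_less_bump) simp_all
  ultimately show ?thesis
    using assms unfolding minimal_above_seqs_def level_seqs_def append_Nil2 by blast
qed

lemma rhoV_minimal_above_seqs:
  assumes "w \<in> minimal_above_seqs k"
  shows "real k + 4 < rhoV k w"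
proof -
  obtain v where v: "v \<in> level_seqs k" "v < w"
    using level_seq_less_minimal_above[OF assms] by blast
  have "finite {i. w i \<noteq> 0}"
    using assms minimal_above_seqs_subset_Vt Vt_finite_support by blast
  with v(2) have "rhoV k v < rhoV k w"
    by (rule rhoV_less)
  then show ?thesis
    using rhoV_level_seqs[OF v(1)] by simp
qed

lemma minimal_above_seqs_antichain:
  assumes "v \<in> minimal_above_seqs k" "w \<in> minimal_above_seqs k"
  shows "\<not> v < w"
proof
  assume "v < w"
  then have le: "v i \<le> w i" for i
    by (simp add: less_fun_def le_funD)
  have signature: "(u 0, u (k + 1), u (k + 2), u (k + 3), u (k + 4))
      \<in> {(1, 1, 1, 1, 1), (2, 1, 1, 1, 0), (3, 2, 2, 0, 0), (4, 3, 1, 0, 0), (6, 2, 1, 0, 0)}"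
    if "u \<in> minimal_above_seqs k" for u
    using that unfolding minimal_above_seqs_def
    by (elim insertE emptyE; simp add: seq_Cons seq_replicate seq_replicate_append del: replicate_Suc)
  have "v 0 = w 0"
    using signature[OF assms(1)] signature[OF assms(2)]
      le[of 0] le[of "k + 1"] le[of "k + 2"] le[of "k + 3"] le[of "k + 4"]
    by auto
  moreover have "u = w" if "u \<in> minimal_above_seqs k" "u 0 = w 0" for u
    using that assms(2) by (auto simp: minimal_above_seqs_def seq_Cons seq_replicate simp del: replicate_Suc)
  ultimately show False
    using assms(1) \<open>v < w\<close> by blast
qed

lemma level_trichotomy_short:
  assumes "antimono v" "v (k + 3) = 0"
  shows "rhoV k v < real k + 4 \<or> v \<in> level_seqs k \<or> (\<exists>w\<in>minimal_above_seqs k. w \<le> v)"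
proof -
  have zero: "\<forall>i\<ge>k + 3. v i = 0"
    using antimono_eventually_zero[OF assms] by blast
  consider "2 \<le> v (k + 2)" | "v (k + 2) = 1" | "v (k + 2) = 0"
    by linarith
  then show ?thesis
  proof cases
    case 1
    have "v = seq (replicate (k + 3) 2 @ []) \<or> seq (3 # replicate (k + 2) 2 @ []) \<le> v"
      using 1 assms by (intro antimono_eq_seq_or_bump_le) simp_all
    then show ?thesis
      unfolding level_seqs_def minimal_above_seqs_def append_Nil2 by blast
  next
    case 2
    consider "3 \<le> v (k + 1)" | "v (k + 1) = 2" | "v (k + 1) \<le> 1"
      by linarith
    then show ?thesis
    proof cases
      case 1
      have "v = seq (replicate (k + 2) 3 @ [1]) \<or> seq (4 # replicate (k + 1) 3 @ [1]) \<le> v"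
        using 1 2 assms by (intro antimono_eq_seq_or_bump_le) (simp_all add: eval_nat_numeral)
      then show ?thesis
        unfolding level_seqs_def minimal_above_seqs_def by blast
    next
      case 3
      have "rhoV k v < real (k + 1) * rho_bound k + sum_list (map (rho k) [1, 1])"
        using 2 3 zero by (intro rhoV_prefix_bound(2)) (auto simp: less_Suc_eq numeral_2_eq_2)
      then have "rhoV k v < real k + 4"
        using rho_bound_le(1)[of k] by (simp add: rho_small_values algebra_simps)
      then show ?thesis ..
    next
      case v1: 2
      consider "5 \<le> v k" | "v k \<le> 4"
        by linarith
      then show ?thesis
      proof cases
        case 1
        have "v = seq (replicate (k + 1) 5 @ [2, 1]) \<or> seq (6 # replicate k 5 @ [2, 1]) \<le> v"
          using 1 2 v1 assms
          by (intro antimono_eq_seq_or_bump_le) (simp_all add: less_Suc_eq eval_nat_numeral)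
        then show ?thesis
          unfolding level_seqs_def minimal_above_seqs_def by blast
      next
        case 2
        have "rhoV k v \<le> real k * rho_bound k + sum_list (map (rho k) [4, 2, 1])"
          using 2 \<open>v (k + 2) = 1\<close> v1 zero
          by (intro rhoV_prefix_bound(1)) (simp_all add: less_Suc_eq numeral_3_eq_3)
        then have "rhoV k v < real k + 4"
          using rho_bound_rho4_rho2[of k] by (simp add: rho_small_values)
        then show ?thesis ..
      qed
    qed
  next
    case 3
    have "rhoV k v < real (k + 2) * rho_bound k + sum_list (map (rho k) [])"
      using 3 antimono_eventually_zero[OF assms(1)] by (intro rhoV_prefix_bound(2)) auto
    then have "rhoV k v < real k + 4"
      using rho_bound_le(2)[of k] by (simp add: algebra_simps)
    then show ?thesis ..
  qed
qed

lemma level_trichotomy: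
  assumes "v \<in> Vt"
  shows "rhoV k v < real k + 4 \<or> v \<in> level_seqs k \<or> (\<exists>w\<in>minimal_above_seqs k. w \<le> v)"
proof -
  have mono: "antimono v"
    using assms by (simp add: Vt_iff)
  consider "1 \<le> v (k + 4)" | "v (k + 4) = 0" "1 \<le> v (k + 3)" | "v (k + 3) = 0"
    by fastforce
  then show ?thesis
  proof cases
    case 1
    have "seq (replicate (k + 5) 1 @ []) \<le> v"
      using 1 by (intro seq_replicate_append_le[OF mono, of _ "k + 4"]) simp_all
    then show ?thesis
      unfolding minimal_above_seqs_def append_Nil2 by blast
  next
    case 2
    have "v = seq (replicate (k + 4) 1 @ []) \<or> seq (2 # replicate (k + 3) 1 @ []) \<le> v"
      using 2 by (intro antimono_eq_seq_or_bump_le[OF mono]) simp_all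
    then show ?thesis
      unfolding level_seqs_def minimal_above_seqs_def append_Nil2 by blast
  next
    case 3
    then show ?thesis
      using mono by (rule level_trichotomy_short[rotated])
  qed
qed

lemma Vt_above_level_imp_ge_minimal:
  assumes "v \<in> Vt" "real k + 4 < rhoV k v"
  shows "\<exists>w\<in>minimal_above_seqs k. w \<le> v"
proof -
  have "\<not> rhoV k v < real k + 4" "v \<notin> level_seqs k"
    using assms(2) rhoV_level_seqs by force+
  then show ?thesis
    using level_trichotomy[OF assms(1), of k] by blast
qed

lemma Vt_level_imp_level_seqs:
  assumes "v \<in> Vt" "rhoV k v = real k + 4"
  shows "v \<in> level_seqs k"
proof -
  have "\<not> w \<le> v" if "w \<in> minimal_above_seqs k" for w
  proof
    assume "w \<le> v"
    then have "rhoV k w \<le> rhoV k v"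
      using assms(1) Vt_finite_support by (intro rhoV_le)
    then show False
      using rhoV_minimal_above_seqs[OF that] assms(2) by simp
  qed
  then show ?thesis
    using level_trichotomy[OF assms(1), of k] assms(2) by auto
qed

lemma minimal_elements_eqI:
  assumes "M \<subseteq> S" "\<And>x y. x \<in> M \<Longrightarrow> y \<in> M \<Longrightarrow> \<not> x < y" "\<And>s. s \<in> S \<Longrightarrow> \<exists>m\<in>M. m \<le> s"
  shows "minimal_elements S = M"
proof (intro equalityI subsetI)
  fix v
  assume "v \<in> minimal_elements S"
  then have v: "v \<in> S" "\<forall>w\<in>S. \<not> w < v"
    unfolding minimal_elements_def by auto
  then obtain m where "m \<in> M" "m \<le> v"
    using assms(3) by blast
  then have "m = v"
    using v(2) assms(1) order.not_eq_order_implies_strict by blast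
  then show "v \<in> M"
    using \<open>m \<in> M\<close> by simp
next
  fix m
  assume "m \<in> M"
  have "\<not> w < m" if w: "w \<in> S" for w
  proof
    assume "w < m"
    obtain m' where "m' \<in> M" "m' \<le> w"
      using assms(3)[OF w] by blast
    have "m' < m"
      using \<open>m' \<le> w\<close> \<open>w < m\<close> by (rule le_less_trans)
    then show False
      using assms(2)[OF \<open>m' \<in> M\<close> \<open>m \<in> M\<close>] by blast
  qed
  then show "m \<in> minimal_elements S"
    using \<open>m \<in> M\<close> assms(1) unfolding minimal_elements_def by blast
qed

theorem proposition3:
  fixes k :: nat
  shows "({v \<in> Vt. rhoV k v = real k + 4} =
           {seq (replicate (k + 4) 1),
            seq (replicate (k + 3) 2),
            seq (replicate (k + 2) 3 @ [1]),
            seq (replicate (k + 1) 5 @ [2, 1])}) \<and>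
         (minimal_elements {v \<in> Vt. rhoV k v > real k + 4} =
           {seq (replicate (k + 5) 1),
            seq (2 # replicate (k + 3) 1),
            seq (3 # replicate (k + 2) 2),
            seq (4 # replicate (k + 1) 3 @ [1]),
            seq (6 # replicate k 5 @ [2, 1])}) \<and>
         (\<forall>w\<in>Vt. rhoV k w > real k + 4 \<longrightarrow>
           (\<exists>v\<in>Vt. v < w \<and> rhoV k v = real k + 4))"
proof -
  have level: "{v \<in> Vt. rhoV k v = real k + 4} = level_seqs k"
    using Vt_level_imp_level_seqs level_seqs_subset_Vt rhoV_level_seqs by blast
  have minimal: "minimal_elements {v \<in> Vt. rhoV k v > real k + 4} = minimal_above_seqs k"
    using minimal_above_seqs_subset_Vt rhoV_minimal_above_seqs minimal_above_seqs_antichain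
      Vt_above_level_imp_ge_minimal
    by (intro minimal_elements_eqI) blast+
  have below: "\<exists>v\<in>Vt. v < w \<and> rhoV k v = real k + 4"
    if w: "w \<in> Vt" "rhoV k w > real k + 4" for w
  proof -
    obtain m where "m \<in> minimal_above_seqs k" "m \<le> w"
      using Vt_above_level_imp_ge_minimal[OF w] by blast
    moreover obtain v where "v \<in> level_seqs k" "v < m"
      using level_seq_less_minimal_above[OF \<open>m \<in> minimal_above_seqs k\<close>] by blast
    ultimately show ?thesis
      using level_seqs_subset_Vt rhoV_level_seqs order.strict_trans2 by blast
  qed
  show ?thesis
    using level minimal below unfolding level_seqs_def minimal_above_seqs_def by blast
qed

end
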